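(* Let $F$ be a graph with at least two vertices, let $r\ge 3$, let $\mathcal H$ be a Berge-$F$-free $r$-uniform hypergraph, and let $p=|E(F)|$. Define $\mathcal H_1,\mathcal H_2,\mathcal H_3,G_1,G_2,G_3$ as in the context (for an arbitrary choice of the triangles $T_h$). Then: (i) $G_2$ contains no copy of $F$; (ii) with $k=\min\{r-1,|V(F)|-1\}$, $$|E(\mathcal H)|\le (|E(F)|-1)\,\mathcal N(K_3,G_1)+\mathcal N(K_r,G_2)+\frac{|E(G_3)|}{k(r-k)}.$$
   Context: The shadow graph of $\mathcal H$ is the graph on $V(\mathcal H)$ where $xy$ is an edge iff some hyperedge contains $\{x,y\}$. An edge $xy$ of the shadow graph is $q$-heavy if at least $q$ hyperedges of $\mathcal H$ contain $\{x,y\}$, and $q$-light otherwise; "heavy"/"light" mean $2$-heavy/$2$-light. For a hyperedge $h$, its subedges are the pairs inside $h$. $\mathcal H_1$ is the set of hyperedges $h$ containing three vertices forming a triangle $T$ (all pairs inside $h$) such that at least two edges of $T$ are heavy and at least one edge of $T$ is $p$-light; for each $h\in\mathcal H_1$ fix one such triangle $T_h$, and let $G_1$ be the graph formed by the edges of all chosen triangles $T_h$. $\mathcal H_2$ is the set of hyperedges all of whose subedges are $p$-heavy, and $G_2$ is the shadow graph of $\mathcal H_2$. $\mathcal H_3$ consists of all remaining hyperedges, and $G_3$ is the graph formed by the light edges contained in hyperedges of $\mathcal H_3$. $\mathcal N(H,G)$ denotes the number of copies of $H$ in $G$. Berge-$F$: injections $\varphi:V(F)\to V(\mathcal H)$,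 $f:E(F)\to E(\mathcal H)$ with $\{\varphi(x),\varphi(y)\}\subseteq f(xy)$ for each $xy\in E(F)$. *)

theory Defs
  imports Complex_Main
begin

definition pairs_in :: "'a set \<Rightarrow> 'a set set" where
  "pairs_in S = {e. e \<subseteq> S \<and> card e = 2}"

definition edge_mult :: "'a set set \<Rightarrow> 'a set \<Rightarrow> nat" where
  "edge_mult H e = card {h \<in> H. e \<subseteq> h}"

definition heavy :: "nat \<Rightarrow> 'a set set \<Rightarrow> 'a set \<Rightarrow> bool" where
  "heavy q H e \<longleftrightarrow> q \<le> edge_mult H e"

definition shadow :: "'a set set \<Rightarrow> 'a set set" where
  "shadow H = {{x, y} | x y. x \<noteq> y \<and> (\<exists>h\<in>H. {x, y} \<subseteq> h)}"

definition good_triangle :: "'a set set \<Rightarrow> nat \<Rightarrow> 'a set \<Rightarrow> 'a set \<Rightarrow> bool" where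
  "good_triangle H p h T \<longleftrightarrow> T \<subseteq> h \<and> card T = 3 \<and>
     2 \<le> card {e \<in> pairs_in T. heavy 2 H e} \<and> (\<exists>e \<in> pairs_in T. \<not> heavy p H e)"

definition H1 :: "'a set set \<Rightarrow> nat \<Rightarrow> 'a set set" where
  "H1 H p = {h \<in> H. \<exists>T. good_triangle H p h T}"

definition H2 :: "'a set set \<Rightarrow> nat \<Rightarrow> 'a set set" where
  "H2 H p = {h \<in> H. \<forall>e \<in> pairs_in h. heavy p H e}"

definition H3 :: "'a set set \<Rightarrow> nat \<Rightarrow> 'a set set" where
  "H3 H p = H - H1 H p - H2 H p"

definition G1 :: "'a set set \<Rightarrow> nat \<Rightarrow> ('a set \<Rightarrow> 'a set) \<Rightarrow> 'a set set" where
  "G1 H p T = (\<Union>h \<in> H1 H p. pairs_in (T h))"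

definition G2 :: "'a set set \<Rightarrow> nat \<Rightarrow> 'a set set" where
  "G2 H p = shadow (H2 H p)"

definition G3 :: "'a set set \<Rightarrow> nat \<Rightarrow> 'a set set" where
  "G3 H p = {e. \<exists>h \<in> H3 H p. e \<in> pairs_in h \<and> \<not> heavy 2 H e}"

definition copies :: "'b set \<Rightarrow> 'b set set \<Rightarrow> 'a set \<Rightarrow> 'a set set \<Rightarrow> ('a set \<times> 'a set set) set" where
  "copies VF EF V E = {(W, D). W \<subseteq> V \<and> D \<subseteq> E \<and>
      (\<exists>\<phi>. bij_betw \<phi> VF W \<and> D = (\<lambda>e. \<phi> ` e) ` EF)}"

definition num_copies :: "'b set \<Rightarrow> 'b set set \<Rightarrow> 'a set \<Rightarrow> 'a set set \<Rightarrow> nat" where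
  "num_copies VF EF V E = card (copies VF EF V E)"

definition K_V :: "nat \<Rightarrow> nat set" where "K_V n = {0..<n}"
definition K_E :: "nat \<Rightarrow> nat set set" where "K_E n = pairs_in {0..<n}"

definition berge_copy :: "'b set \<Rightarrow> 'b set set \<Rightarrow> 'a set \<Rightarrow> 'a set set \<Rightarrow> bool" where
  "berge_copy VF EF V H \<longleftrightarrow> (\<exists>\<phi> f. inj_on \<phi> VF \<and> \<phi> ` VF \<subseteq> V \<and> inj_on f EF \<and> f ` EF \<subseteq> H \<and>
      (\<forall>e \<in> EF. \<phi> ` e \<subseteq> f e))"

definition is_graph :: "'b set \<Rightarrow> 'b set set \<Rightarrow> bool" where
  "is_graph VF EF \<longleftrightarrow> finite VF \<and> (\<forall>e \<in> EF. e \<subseteq> VF \<and> card e = 2)"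

definition uniform_hypergraph :: "nat \<Rightarrow> 'a set \<Rightarrow> 'a set set \<Rightarrow> bool" where
  "uniform_hypergraph r V H \<longleftrightarrow> finite V \<and> (\<forall>h \<in> H. h \<subseteq> V \<and> card h = r)"

end

theory Submission
  imports Defs
begin

(* If every pair in the image of an injection of V(F) lies in at least p = |E(F)| hyperedges, the
   edges of F can be given distinct hyperedges greedily, so a Berge-free H has no such image.
   This gives (i) at once. For h in H_3, no heavy path x-y-z inside h has a p-light pair (it would
   be a good triangle), so the closed heavy neighbourhood of any x in h is a clique of p-heavy
   pairs; it has fewer than r vertices (else h is in H_2) and fewer than |V(F)| (else Berge-F).
   Every pair leaving such a neighbourhood is light, which forces at least k(r-k) light pairs in h,
   and a light pair lies in only one hyperedge. Finally, hyperedges of H_2 are copies of K_r in G_2,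
   and a triangle of G_1 is chosen by fewer than p hyperedges since one of its sides is p-light. *)

lemma finite_pairs_in: "finite S \<Longrightarrow> finite (pairs_in S)"
  unfolding pairs_in_def by (rule finite_subset[of _ "Pow S"]) auto

lemma card_pairs_in: "finite S \<Longrightarrow> card (pairs_in S) = card S choose 2"
  unfolding pairs_in_def by (rule n_subsets)

lemma pairs_in_mono: "A \<subseteq> B \<Longrightarrow> pairs_in A \<subseteq> pairs_in B"
  unfolding pairs_in_def by auto

lemma doubleton_in_pairs_in: "x \<in> S \<Longrightarrow> y \<in> S \<Longrightarrow> x \<noteq> y \<Longrightarrow> {x, y} \<in> pairs_in S"
  unfolding pairs_in_def by auto

lemma pairs_inE:
  assumes "e \<in> pairs_in S"
  obtains x y where "e = {x, y}" "x \<noteq> y" "x \<in> S" "y \<in> S"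
  using assms unfolding pairs_in_def by (auto simp: card_2_iff)

lemma image_pairs_in_inj_on:
  assumes "inj_on \<phi> A" "e \<in> pairs_in A"
  shows "\<phi> ` e \<in> pairs_in (\<phi> ` A)"
  using assms(2)
  by (elim pairs_inE) (use assms(1) in \<open>auto simp: inj_on_def intro!: doubleton_in_pairs_in\<close>)

lemma image_pairs_in_bij_betw:
  assumes "bij_betw \<phi> A B"
  shows "(\<lambda>e. \<phi> ` e) ` pairs_in A = pairs_in B"
proof
  have inj: "inj_on \<phi> A" and B: "\<phi> ` A = B"
    using assms by (auto simp: bij_betw_def)
  show "(\<lambda>e. \<phi> ` e) ` pairs_in A \<subseteq> pairs_in B"
    using image_pairs_in_inj_on[OF inj] B by auto
  show "pairs_in B \<subseteq> (\<lambda>e. \<phi> ` e) ` pairs_in A"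
  proof
    fix e assume "e \<in> pairs_in B"
    then obtain x y where e: "e = {x, y}" "x \<noteq> y" "x \<in> B" "y \<in> B" by (rule pairs_inE)
    obtain x' y' where "x' \<in> A" "y' \<in> A" "x = \<phi> x'" "y = \<phi> y'" using e B by blast
    then show "e \<in> (\<lambda>e. \<phi> ` e) ` pairs_in A"
      using e by (auto intro!: image_eqI[of _ _ "{x', y'}"] doubleton_in_pairs_in)
  qed
qed

lemma card_edges_le:
  assumes "is_graph VF EF"
  shows "card EF \<le> card VF choose 2"
proof -
  have "finite VF" "EF \<subseteq> pairs_in VF"
    using assms unfolding is_graph_def pairs_in_def by auto
  then show ?thesis using card_mono[OF finite_pairs_in] card_pairs_in by metis
qed

lemma complete_graph_in_copies:
  assumes "finite C" "C \<subseteq> V" "card C = n" "pairs_in C \<subseteq> E"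
  shows "(C, pairs_in C) \<in> copies (K_V n) (K_E n) V E"
proof -
  obtain \<phi> where "bij_betw \<phi> {0..<n} C" using ex_bij_betw_nat_finite assms(1,3) by blast
  then show ?thesis
    using assms image_pairs_in_bij_betw unfolding copies_def K_V_def K_E_def by blast
qed

lemma finite_copies:
  assumes "finite V" "E \<subseteq> Pow V"
  shows "finite (copies VF EF V E)"
proof -
  from assms have "finite (Pow V \<times> Pow E)" by (meson finite_Pow_iff finite_SigmaI finite_subset)
  then show ?thesis by (rule finite_subset[rotated]) (auto simp: copies_def)
qed

lemma inj_choice_if_card_le:
  assumes "finite E" "\<forall>e\<in>E. finite (S e) \<and> card E \<le> card (S e)"
  shows "\<exists>f. inj_on f E \<and> (\<forall>e\<in>E. f e \<in> S e)"
  using assms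
proof (induction E rule: finite_induct)
  case empty
  then show ?case by auto
next
  case (insert x E)
  then have "\<forall>e\<in>E. finite (S e) \<and> card E \<le> card (S e)" by auto
  then obtain f where f: "inj_on f E" "\<forall>e\<in>E. f e \<in> S e" using insert.IH by blast
  have "card (f ` E) < card (S x)"
    using insert card_image_le[of E f] by auto
  then obtain y where y: "y \<in> S x" "y \<notin> f ` E"
    using insert by (meson card_mono finite_imageI leD subsetI)
  have "inj_on (f(x := y)) (insert x E)"
    using f y insert(2) by (auto simp: inj_on_def image_iff)
  moreover have "\<forall>e\<in>insert x E. (f(x := y)) e \<in> S e" using f y insert(2) by auto
  ultimately show ?case by blast
qed

lemma berge_copy_if_heavy_image:
  assumes "inj_on \<phi> VF" "\<phi> ` VF \<subseteq> V" "finite EF" "finite H"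
    and "\<forall>e\<in>EF. heavy (card EF) H (\<phi> ` e)"
  shows "berge_copy VF EF V H"
proof -
  obtain f where "inj_on f EF" "\<forall>e\<in>EF. f e \<in> {h \<in> H. \<phi> ` e \<subseteq> h}"
    using inj_choice_if_card_le[OF assms(3), of "\<lambda>e. {h \<in> H. \<phi> ` e \<subseteq> h}"] assms(4,5)
    unfolding heavy_def edge_mult_def by auto
  then show ?thesis using assms unfolding berge_copy_def by blast
qed

lemma berge_copy_if_heavy_clique:
  assumes "is_graph VF EF" "finite H" "K \<subseteq> V" "finite K" "card VF \<le> card K"
    and "\<forall>e\<in>pairs_in K. heavy (card EF) H e"
  shows "berge_copy VF EF V H"
proof -
  have VF: "finite VF" "EF \<subseteq> pairs_in VF"
    using assms(1) unfolding is_graph_def pairs_in_def by auto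
  obtain \<phi> where \<phi>: "inj_on \<phi> VF" "\<phi> ` VF \<subseteq> K"
    using card_le_inj[OF VF(1) assms(4,5)] by blast
  have "\<phi> ` e \<in> pairs_in K" if "e \<in> EF" for e
    using image_pairs_in_inj_on[OF \<phi>(1)] pairs_in_mono[OF \<phi>(2)] that VF(2) by blast
  then have "\<forall>e\<in>EF. heavy (card EF) H (\<phi> ` e)" using assms(6) by blast
  moreover have "finite EF" using VF finite_pairs_in finite_subset by blast
  moreover have "\<phi> ` VF \<subseteq> V" using \<phi>(2) assms(3) by blast
  ultimately show ?thesis
    using berge_copy_if_heavy_image[OF \<phi>(1) _ _ assms(2)] by blast
qed

lemma mult_diff_le_mult_diff:
  fixes s k r :: nat
  assumes "r - k \<le> s" "s \<le> k" "k \<le> r"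
  shows "k * (r - k) \<le> s * (r - s)"
proof -
  have "int (s * (r - s)) = int (k * (r - k)) + (int k - int s) * (int s + int k - int r)"
    using assms by (simp add: of_nat_diff algebra_simps)
  moreover have "(int k - int s) * (int s + int k - int r) \<ge> 0" using assms by auto
  ultimately show ?thesis by linarith
qed

lemma mult_diff_le_if_twice_ge:
  fixes L k r :: nat
  assumes "r * k \<le> 2 * L" "r * (r - k) \<le> 2 * L" "k \<le> r"
  shows "k * (r - k) \<le> L"
proof (cases "2 * k \<le> r")
  case True
  then have "2 * k * (r - k) \<le> r * (r - k)" by (rule mult_le_mono1)
  then show ?thesis using assms by linarith
next
  case False
  then have "2 * (r - k) * k \<le> r * k" by (intro mult_le_mono1) linarith
  then show ?thesis using assms by (simp add: algebra_simps)
qed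

lemma card_cut_le:
  assumes "finite A" "C \<subseteq> A" "finite L" "\<And>a b. a \<in> C \<Longrightarrow> b \<in> A - C \<Longrightarrow> {a, b} \<in> L"
  shows "card C * (card A - card C) \<le> card L"
proof -
  have "inj_on (\<lambda>(a, b). {a, b}) (C \<times> (A - C))"
    by (auto simp: inj_on_def doubleton_eq_iff)
  moreover have "(\<lambda>(a, b). {a, b}) ` (C \<times> (A - C)) \<subseteq> L" using assms(4) by auto
  ultimately have "card (C \<times> (A - C)) \<le> card L" using assms(3) by (rule card_inj_on_le)
  then show ?thesis
    using assms(1,2) by (simp add: card_cartesian_product card_Diff_subset finite_subset)
qed

lemma sum_card_le_twice_card_pairs:
  assumes "finite A" "L \<subseteq> pairs_in A" "\<And>x. x \<in> A \<Longrightarrow> N x \<subseteq> A"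
    and "\<And>x y. x \<in> A \<Longrightarrow> y \<in> N x \<Longrightarrow> {x, y} \<in> L"
  shows "(\<Sum>x\<in>A. card (N x)) \<le> 2 * card L"
proof -
  let ?ordered = "\<lambda>e. {(a, b). a \<in> e \<and> b \<in> e \<and> a \<noteq> b}"
  have finL: "finite L" using assms(1,2) finite_pairs_in finite_subset by blast
  have card_ordered: "card (?ordered e) \<le> 2" if e: "e \<in> L" for e
  proof -
    obtain u v where "e = {u, v}" using e assms(2) by (blast elim: pairs_inE)
    then have "?ordered e \<subseteq> {(u, v), (v, u)}" by blast
    then have "card (?ordered e) \<le> card {(u, v), (v, u)}" by (simp add: card_mono)
    also have "\<dots> \<le> 2" by (cases "u = v") auto
    finally show ?thesis .
  qed
  have "Sigma A N \<subseteq> (\<Union>e\<in>L. ?ordered e)"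
  proof safe
    fix x y assume "x \<in> A" "y \<in> N x"
    then have "{x, y} \<in> L" using assms(4) by blast
    moreover have "x \<noteq> y"
      using \<open>{x, y} \<in> L\<close> assms(2) by (cases "x = y") (auto simp: pairs_in_def)
    ultimately show "(x, y) \<in> (\<Union>e\<in>L. ?ordered e)" by blast
  qed
  moreover have "finite (\<Union>e\<in>L. ?ordered e)"
  proof (rule finite_subset)
    show "(\<Union>e\<in>L. ?ordered e) \<subseteq> A \<times> A" using assms(2) unfolding pairs_in_def by blast
  qed (use assms(1) in simp)
  ultimately have "card (Sigma A N) \<le> card (\<Union>e\<in>L. ?ordered e)" by (rule card_mono[rotated])
  also have "\<dots> \<le> (\<Sum>e\<in>L. card (?ordered e))" using finL by (rule card_UN_le)
  also have "\<dots> \<le> (\<Sum>e\<in>L. 2)" using card_ordered by (rule sum_mono)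
  also have "\<dots> = 2 * card L" by simp
  finally show ?thesis
    using assms(1,3) finite_subset by (subst (asm) card_SigmaI) blast+
qed

(* Either a single cut N x, A - N x is already large, or every vertex lies in at least
   max k (card A - k) pairs of L. *)
lemma mult_diff_le_card_separating_pairs:
  assumes "finite A" "k \<le> card A" "L \<subseteq> pairs_in A"
    and N: "\<And>x. x \<in> A \<Longrightarrow> x \<in> N x \<and> N x \<subseteq> A \<and> card (N x) \<le> k"
    and separating: "\<And>x a b. x \<in> A \<Longrightarrow> a \<in> N x \<Longrightarrow> b \<in> A - N x \<Longrightarrow> {a, b} \<in> L"
  shows "k * (card A - k) \<le> card L"
proof (cases "\<exists>x\<in>A. card A - k \<le> card (N x)")
  case True
  then obtain x where x: "x \<in> A" "card A - k \<le> card (N x)" by blast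
  have "card (N x) * (card A - card (N x)) \<le> card L"
    using assms(1,3) N[OF x(1)] separating[OF x(1)] finite_pairs_in finite_subset
    by (intro card_cut_le) blast+
  moreover have "k * (card A - k) \<le> card (N x) * (card A - card (N x))"
    using mult_diff_le_mult_diff x N assms(2) by blast
  ultimately show ?thesis by linarith
next
  case False
  have "k \<le> card (A - N x)" "card A - k \<le> card (A - N x)" if "x \<in> A" for x
    using False that N[OF that] card_Diff_subset[of "N x" A] assms(1) finite_subset by fastforce+
  then have "card A * k \<le> (\<Sum>x\<in>A. card (A - N x))"
    and "card A * (card A - k) \<le> (\<Sum>x\<in>A. card (A - N x))"
    using sum_bounded_below[of A _ "\<lambda>x. card (A - N x)"] by simp_all
  moreover have "(\<Sum>x\<in>A. card (A - N x)) \<le> 2 * card L"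
    using assms(1,3) separating N by (intro sum_card_le_twice_card_pairs) auto
  ultimately show ?thesis using assms(2) by (intro mult_diff_le_if_twice_ge) simp_all
qed

lemma card_le_mult_card_image:
  assumes "finite A" "\<And>t. t \<in> f ` A \<Longrightarrow> card {a \<in> A. f a = t} \<le> k"
  shows "card A \<le> k * card (f ` A)"
proof -
  have "A = (\<Union>t\<in>f ` A. {a \<in> A. f a = t})" by blast
  then have "card A \<le> (\<Sum>t\<in>f ` A. card {a \<in> A. f a = t})"
    using card_UN_le[of "f ` A" "\<lambda>t. {a \<in> A. f a = t}"] assms(1) by simp
  also have "\<dots> \<le> (\<Sum>t\<in>f ` A. k)" using assms(2) by (rule sum_mono)
  finally show ?thesis by (simp add: mult.commute)
qed

lemma uniform_hypergraph_finite:
  assumes "uniform_hypergraph r V H"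
  shows "finite H" and "h \<in> H \<Longrightarrow> finite h"
proof -
  have "finite V" "H \<subseteq> Pow V" using assms unfolding uniform_hypergraph_def by auto
  then show "finite H" and "h \<in> H \<Longrightarrow> finite h"
    by (auto intro: finite_subset[of _ "Pow _"] finite_subset)
qed

lemma heavy_mono: "q \<le> p \<Longrightarrow> heavy p H e \<Longrightarrow> heavy q H e"
  unfolding heavy_def by simp

lemma heavy_1_if_subset:
  assumes "finite H" "h \<in> H" "e \<subseteq> h"
  shows "heavy 1 H e"
proof -
  have "{g \<in> H. e \<subseteq> g} \<noteq> {}" using assms(2,3) by blast
  then show ?thesis using assms(1) unfolding heavy_def edge_mult_def
    by (simp add: Suc_le_eq card_gt_0_iff)
qed

lemma two_le_if_H3:
  assumes "finite H" "h \<in> H3 H p"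
  shows "2 \<le> p"
proof -
  obtain e where "h \<in> H" "e \<in> pairs_in h" "\<not> heavy p H e"
    using assms(2) unfolding H3_def H2_def by blast
  moreover have "heavy 1 H e"
    using heavy_1_if_subset[OF assms(1)] calculation unfolding pairs_in_def by blast
  ultimately show ?thesis unfolding heavy_def by linarith
qed

lemma heavy_if_in_G2:
  assumes "e \<in> G2 H p"
  shows "heavy p H e"
proof -
  obtain x y h where "e = {x, y}" "x \<noteq> y" "h \<in> H2 H p" "{x, y} \<subseteq> h"
    using assms unfolding G2_def shadow_def by blast
  then show ?thesis unfolding H2_def using doubleton_in_pairs_in[of x h y] by auto
qed

lemma pairs_in_subset_G2:
  assumes "h \<in> H2 H p"
  shows "pairs_in h \<subseteq> G2 H p"
proof
  fix e assume "e \<in> pairs_in h"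
  then obtain x y where "e = {x, y}" "x \<noteq> y" "x \<in> h" "y \<in> h" by (rule pairs_inE)
  then show "e \<in> G2 H p" using assms unfolding G2_def shadow_def by blast
qed

lemma G2_subset_Pow: "\<forall>h\<in>H. h \<subseteq> V \<Longrightarrow> G2 H p \<subseteq> Pow V"
  unfolding G2_def shadow_def H2_def by blast

lemma G1_subset_Pow:
  assumes "\<forall>h\<in>H. h \<subseteq> V" "\<forall>h\<in>H1 H p. good_triangle H p h (T h)"
  shows "G1 H p T \<subseteq> Pow V"
  using assms unfolding G1_def H1_def good_triangle_def pairs_in_def by blast

lemma copies_G2_empty:
  assumes "is_graph VF EF" "finite H" "\<not> berge_copy VF EF V H"
  shows "copies VF EF V (G2 H (card EF)) = {}"
proof (rule ccontr)
  assume "copies VF EF V (G2 H (card EF)) \<noteq> {}"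
  then obtain W \<phi> where "W \<subseteq> V" "bij_betw \<phi> VF W"
    and edges: "(\<lambda>e. \<phi> ` e) ` EF \<subseteq> G2 H (card EF)"
    unfolding copies_def by blast
  then have "inj_on \<phi> VF" "\<phi> ` VF \<subseteq> V" by (auto simp: bij_betw_def)
  moreover have "finite EF"
    using assms(1) unfolding is_graph_def by (auto intro: finite_subset[of _ "Pow _"])
  moreover note \<open>finite H\<close>
  moreover have "\<forall>e\<in>EF. heavy (card EF) H (\<phi> ` e)" using edges heavy_if_in_G2 by blast
  ultimately have "berge_copy VF EF V H" by (rule berge_copy_if_heavy_image)
  with assms(3) show False ..
qed

lemma card_H2_le_num_copies:
  assumes "uniform_hypergraph r V H"
  shows "card (H2 H p) \<le> num_copies (K_V r) (K_E r) V (G2 H p)"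
  unfolding num_copies_def
proof (rule card_inj_on_le)
  show "inj_on (\<lambda>h. (h, pairs_in h)) (H2 H p)" by (rule inj_onI) simp
  show "(\<lambda>h. (h, pairs_in h)) ` H2 H p \<subseteq> copies (K_V r) (K_E r) V (G2 H p)"
  proof clarify
    fix h assume h: "h \<in> H2 H p"
    then have "h \<in> H" unfolding H2_def by blast
    then show "(h, pairs_in h) \<in> copies (K_V r) (K_E r) V (G2 H p)"
      using assms uniform_hypergraph_finite(2)[OF assms] pairs_in_subset_G2[OF h]
      unfolding uniform_hypergraph_def by (intro complete_graph_in_copies) auto
  qed
  show "finite (copies (K_V r) (K_E r) V (G2 H p))"
    using assms unfolding uniform_hypergraph_def by (intro finite_copies G2_subset_Pow) auto
qed

lemma card_H1_with_triangle_le: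
  assumes "finite H" "\<forall>h\<in>H1 H p. good_triangle H p h (T h)"
  shows "card {h \<in> H1 H p. T h = t} \<le> p - 1"
proof (cases "{h \<in> H1 H p. T h = t} = {}")
  case False
  then obtain h0 where "h0 \<in> H1 H p" "T h0 = t" by blast
  then obtain e where e: "e \<in> pairs_in t" "\<not> heavy p H e"
    using assms(2) unfolding good_triangle_def by blast
  have "{h \<in> H1 H p. T h = t} \<subseteq> {g \<in> H. e \<subseteq> g}"
    using assms(2) e(1) unfolding H1_def good_triangle_def pairs_in_def by blast
  then have "card {h \<in> H1 H p. T h = t} \<le> edge_mult H e"
    unfolding edge_mult_def using assms(1) by (simp add: card_mono)
  then show ?thesis using e(2) unfolding heavy_def by linarith
next
  case True
  then show ?thesis by (metis card.empty zero_le)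
qed

lemma card_triangles_le_num_copies:
  assumes "uniform_hypergraph r V H" "\<forall>h\<in>H1 H p. good_triangle H p h (T h)"
  shows "card (T ` H1 H p) \<le> num_copies (K_V 3) (K_E 3) V (G1 H p T)"
  unfolding num_copies_def
proof (rule card_inj_on_le)
  show "inj_on (\<lambda>t. (t, pairs_in t)) (T ` H1 H p)" by (rule inj_onI) simp
  show "(\<lambda>t. (t, pairs_in t)) ` T ` H1 H p \<subseteq> copies (K_V 3) (K_E 3) V (G1 H p T)"
  proof clarify
    fix h assume h: "h \<in> H1 H p"
    then have "T h \<subseteq> V" "card (T h) = 3"
      using assms unfolding uniform_hypergraph_def H1_def good_triangle_def by auto
    moreover have "pairs_in (T h) \<subseteq> G1 H p T" using h unfolding G1_def by blast
    ultimately show "(T h, pairs_in (T h)) \<in> copies (K_V 3) (K_E 3) V (G1 H p T)"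
      by (intro complete_graph_in_copies) (auto intro: card_ge_0_finite)
  qed
  show "finite (copies (K_V 3) (K_E 3) V (G1 H p T))"
    using assms unfolding uniform_hypergraph_def by (intro finite_copies G1_subset_Pow) auto
qed

lemma card_H1_le:
  assumes "uniform_hypergraph r V H" "\<forall>h\<in>H1 H p. good_triangle H p h (T h)"
  shows "real (card (H1 H p)) \<le> (real p - 1) * real (num_copies (K_V 3) (K_E 3) V (G1 H p T))"
proof (cases "p = 0")
  case True
  then have "H1 H p = {}" unfolding H1_def good_triangle_def heavy_def by simp
  then have "G1 H p T = {}" unfolding G1_def by simp
  moreover have "{0, 1} \<in> K_E 3" unfolding K_E_def pairs_in_def by simp
  ultimately have "copies (K_V 3) (K_E 3) V (G1 H p T) = {}" unfolding copies_def by blast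
  then show ?thesis using \<open>H1 H p = {}\<close> unfolding num_copies_def by simp
next
  case False
  have "finite (H1 H p)"
    using uniform_hypergraph_finite(1)[OF assms(1)] unfolding H1_def by simp
  then have "card (H1 H p) \<le> (p - 1) * card (T ` H1 H p)"
    using card_H1_with_triangle_le[OF uniform_hypergraph_finite(1)[OF assms(1)] assms(2)]
    by (rule card_le_mult_card_image)
  also have "\<dots> \<le> (p - 1) * num_copies (K_V 3) (K_E 3) V (G1 H p T)"
    using card_triangles_le_num_copies[OF assms] by simp
  finally have "real (card (H1 H p)) \<le> real (p - 1) * real (num_copies (K_V 3) (K_E 3) V (G1 H p T))"
    by (simp flip: of_nat_mult)
  then show ?thesis using False by (simp add: of_nat_diff)
qed

definition light_pairs :: "'a set set \<Rightarrow> 'a set \<Rightarrow> 'a set set" where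
  "light_pairs H h = {e \<in> pairs_in h. \<not> heavy 2 H e}"

lemma finite_light_pairs: "finite h \<Longrightarrow> finite (light_pairs H h)"
  unfolding light_pairs_def by (rule finite_subset[OF _ finite_pairs_in]) auto

lemma G3_eq_UN_light_pairs: "G3 H p = (\<Union>h\<in>H3 H p. light_pairs H h)"
  unfolding G3_def light_pairs_def by blast

lemma disjoint_light_pairs:
  assumes "finite H" "h1 \<in> H" "h2 \<in> H" "h1 \<noteq> h2"
  shows "light_pairs H h1 \<inter> light_pairs H h2 = {}"
proof (rule ccontr)
  assume "light_pairs H h1 \<inter> light_pairs H h2 \<noteq> {}"
  then obtain e where e: "e \<in> light_pairs H h1" "e \<in> light_pairs H h2" by blast
  then have "{h1, h2} \<subseteq> {g \<in> H. e \<subseteq> g}"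
    using assms(2,3) unfolding light_pairs_def pairs_in_def by blast
  then have "card {h1, h2} \<le> edge_mult H e"
    unfolding edge_mult_def using assms(1) by (simp add: card_mono)
  then have "heavy 2 H e" using assms(4) unfolding heavy_def by simp
  then show False using e unfolding light_pairs_def by blast
qed

lemma card_H3_mult_le_card_G3:
  assumes "finite H" "\<forall>h\<in>H. finite h" "\<forall>h\<in>H3 H p. m \<le> card (light_pairs H h)"
  shows "card (H3 H p) * m \<le> card (G3 H p)"
proof -
  have H3: "finite (H3 H p)" "H3 H p \<subseteq> H" using assms(1) unfolding H3_def by auto
  have "\<forall>h\<in>H3 H p. finite (light_pairs H h)"
    using H3(2) assms(2) finite_light_pairs by blast
  then have "card (G3 H p) = (\<Sum>h\<in>H3 H p. card (light_pairs H h))"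
    unfolding G3_eq_UN_light_pairs
    using H3 disjoint_light_pairs[OF assms(1)] by (intro card_UN_disjoint) blast+
  then show ?thesis
    using sum_bounded_below[of "H3 H p" m "\<lambda>h. card (light_pairs H h)"] assms(3)
    by (simp add: mult.commute)
qed

lemma heavy_path_closes_triangle:
  assumes "\<not> good_triangle H p h {x, y, z}" "{x, y, z} \<subseteq> h" "x \<noteq> y" "y \<noteq> z" "x \<noteq> z"
    and "heavy 2 H {x, y}" "heavy 2 H {y, z}"
  shows "heavy p H {x, y} \<and> heavy p H {y, z} \<and> heavy p H {x, z}"
proof -
  have "{{x, y}, {y, z}} \<subseteq> {e \<in> pairs_in {x, y, z}. heavy 2 H e}"
    using assms(3-7) by (auto intro: doubleton_in_pairs_in)
  moreover have "card {{x, y}, {y, z}} = 2"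
    using assms(3-5) by (auto simp: doubleton_eq_iff)
  moreover have "finite {e \<in> pairs_in {x, y, z}. heavy 2 H e}"
    using finite_pairs_in[of "{x, y, z}"] by simp
  ultimately have "2 \<le> card {e \<in> pairs_in {x, y, z}. heavy 2 H e}"
    by (metis card_mono)
  moreover have "card {x, y, z} = 3" using assms(3-5) by simp
  ultimately have "\<forall>e\<in>pairs_in {x, y, z}. heavy p H e"
    using assms(1,2) unfolding good_triangle_def by blast
  then show ?thesis using assms(3-5) by (auto intro: doubleton_in_pairs_in)
qed

definition closed_heavy_nbhd :: "'a set set \<Rightarrow> 'a set \<Rightarrow> 'a \<Rightarrow> 'a set" where
  "closed_heavy_nbhd H h x = {y \<in> h. y = x \<or> heavy 2 H {x, y}}"

lemma closed_heavy_nbhd_clique: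
  assumes no_good: "\<And>S. \<not> good_triangle H p h S"
    and "x \<in> h" "3 \<le> card (closed_heavy_nbhd H h x)"
    and "y \<in> closed_heavy_nbhd H h x" "z \<in> closed_heavy_nbhd H h x" "y \<noteq> z"
  shows "heavy p H {y, z}"
proof -
  let ?N = "closed_heavy_nbhd H h x"
  have path: "heavy p H {u, w}" if "u \<in> ?N" "w \<in> ?N" "u \<noteq> x" "w \<noteq> x" "u \<noteq> w" for u w
    using heavy_path_closes_triangle[OF no_good, of u x w] that assms(2)
    unfolding closed_heavy_nbhd_def by (auto simp: insert_commute)
  have spoke: "heavy p H {x, w}" if "w \<in> ?N" "w \<noteq> x" for w
  proof -
    have "card {x, w} \<le> 2" by (cases "x = w") auto
    then have "card {x, w} < card ?N" using assms(3) by linarith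
    then obtain u where "u \<in> ?N" "u \<noteq> x" "u \<noteq> w"
      by (metis card_mono finite.emptyI finite.insertI insertCI leD subsetI)
    then show ?thesis
      using heavy_path_closes_triangle[OF no_good, of u x w] that assms(2)
      unfolding closed_heavy_nbhd_def by (auto simp: insert_commute)
  qed
  consider "y = x" | "z = x" | "y \<noteq> x" "z \<noteq> x" by blast
  then show ?thesis
  proof cases
    case 1
    then show ?thesis using spoke[of z] assms(5,6) by simp
  next
    case 2
    then show ?thesis using spoke[of y] assms(4,6) by (simp add: insert_commute)
  qed (use path assms(4-6) in blast)
qed

lemma light_pair_leaving_closed_heavy_nbhd:
  assumes no_good: "\<And>S. \<not> good_triangle H p h S" and "2 \<le> p" "x \<in> h"
    and "a \<in> closed_heavy_nbhd H h x" "b \<in> h" "b \<notin> closed_heavy_nbhd H h x"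
  shows "{a, b} \<in> light_pairs H h"
proof -
  have "a \<in> h" "a \<noteq> b" "b \<noteq> x" using assms(3-6) unfolding closed_heavy_nbhd_def by auto
  moreover have "\<not> heavy 2 H {a, b}"
  proof
    assume ab: "heavy 2 H {a, b}"
    then have "a \<noteq> x" using assms(5,6) unfolding closed_heavy_nbhd_def by auto
    then have "heavy 2 H {x, a}" using assms(4) unfolding closed_heavy_nbhd_def by auto
    then have "heavy p H {x, b}"
      using heavy_path_closes_triangle[OF no_good, of x a b] ab assms(3,5) \<open>a \<in> h\<close>
        \<open>a \<noteq> x\<close> \<open>a \<noteq> b\<close> \<open>b \<noteq> x\<close> by auto
    then have "heavy 2 H {x, b}" using assms(2) heavy_mono by blast
    then show False using assms(5,6) unfolding closed_heavy_nbhd_def by auto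
  qed
  ultimately show ?thesis
    using assms(5) unfolding light_pairs_def by (auto intro: doubleton_in_pairs_in)
qed

lemma card_closed_heavy_nbhd_less_card:
  assumes no_good: "\<And>S. \<not> good_triangle H p h S"
    and "h \<in> H" "h \<notin> H2 H p" "finite h" "3 \<le> card h" "x \<in> h"
  shows "card (closed_heavy_nbhd H h x) < card h"
proof (rule ccontr)
  let ?N = "closed_heavy_nbhd H h x"
  assume "\<not> card ?N < card h"
  moreover have "?N \<subseteq> h" unfolding closed_heavy_nbhd_def by blast
  ultimately have N: "?N = h" using assms(4) card_subset_eq card_mono by (metis le_antisym not_less)
  have "\<forall>e\<in>pairs_in h. heavy p H e"
  proof
    fix e assume "e \<in> pairs_in h"
    then obtain y z where "e = {y, z}" "y \<noteq> z" "y \<in> h" "z \<in> h" by (rule pairs_inE)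
    then show "heavy p H e" using closed_heavy_nbhd_clique[OF no_good assms(6)] N assms(5) by simp
  qed
  then show False using assms(2,3) unfolding H2_def by blast
qed

lemma card_closed_heavy_nbhd_less_card_vertices:
  assumes no_good: "\<And>S. \<not> good_triangle H (card EF) h S"
    and "is_graph VF EF" "3 \<le> card VF" "finite H" "h \<subseteq> V" "finite h" "x \<in> h"
    and "\<not> berge_copy VF EF V H"
  shows "card (closed_heavy_nbhd H h x) < card VF"
proof (rule ccontr)
  let ?N = "closed_heavy_nbhd H h x"
  assume "\<not> card ?N < card VF"
  then have "card VF \<le> card ?N" by simp
  moreover have "\<forall>e\<in>pairs_in ?N. heavy (card EF) H e"
    using closed_heavy_nbhd_clique[OF no_good assms(7)] \<open>card VF \<le> card ?N\<close> assms(3)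
    by (auto elim!: pairs_inE)
  moreover have "?N \<subseteq> V" "finite ?N"
    using assms(5,6) unfolding closed_heavy_nbhd_def by auto
  ultimately have "berge_copy VF EF V H"
    using berge_copy_if_heavy_clique[OF assms(2,4)] by blast
  with assms(8) show False ..
qed

lemma three_le_card_vertices:
  assumes "is_graph VF EF" "2 \<le> card EF"
  shows "3 \<le> card VF"
proof (rule ccontr)
  assume "\<not> 3 \<le> card VF"
  then have "card VF choose 2 \<le> 2 choose 2" by (intro binomial_right_mono) simp
  then show False using card_edges_le[OF assms(1)] assms(2) by simp
qed

lemma card_light_pairs_ge_if_H3:
  assumes graph: "is_graph VF EF" and "3 \<le> r"
    and unif: "uniform_hypergraph r V H" and no_berge: "\<not> berge_copy VF EF V H"
    and h: "h \<in> H3 H (card EF)"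
  shows "min (r - 1) (card VF - 1) * (r - min (r - 1) (card VF - 1)) \<le> card (light_pairs H h)"
proof -
  let ?k = "min (r - 1) (card VF - 1)"
  have finH: "finite H" using unif by (rule uniform_hypergraph_finite)
  have "h \<in> H" "h \<notin> H1 H (card EF)" "h \<notin> H2 H (card EF)" using h unfolding H3_def by auto
  then have no_good: "\<not> good_triangle H (card EF) h S" for S unfolding H1_def by blast
  have hV: "h \<subseteq> V" "card h = r" "finite h"
    using \<open>h \<in> H\<close> unif uniform_hypergraph_finite(2)[OF unif] unfolding uniform_hypergraph_def by auto
  have p2: "2 \<le> card EF" using finH h by (rule two_le_if_H3)
  have VF3: "3 \<le> card VF" using graph p2 by (rule three_le_card_vertices)
  have "card (closed_heavy_nbhd H h x) \<le> ?k" if "x \<in> h" for x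
  proof -
    have "card (closed_heavy_nbhd H h x) < r"
      using card_closed_heavy_nbhd_less_card[OF no_good \<open>h \<in> H\<close> \<open>h \<notin> H2 H (card EF)\<close>]
        hV that assms(2) by simp
    moreover have "card (closed_heavy_nbhd H h x) < card VF"
      using card_closed_heavy_nbhd_less_card_vertices[OF no_good graph VF3 finH hV(1) hV(3) that]
        no_berge .
    ultimately show ?thesis by linarith
  qed
  then have "x \<in> closed_heavy_nbhd H h x \<and> closed_heavy_nbhd H h x \<subseteq> h
      \<and> card (closed_heavy_nbhd H h x) \<le> ?k" if "x \<in> h" for x
    using that unfolding closed_heavy_nbhd_def by auto
  moreover have "light_pairs H h \<subseteq> pairs_in h" unfolding light_pairs_def by blast
  ultimately show ?thesis
    using mult_diff_le_card_separating_pairs[of h ?k "light_pairs H h" "closed_heavy_nbhd H h"]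
      light_pair_leaving_closed_heavy_nbhd[OF no_good p2] hV
    by auto
qed

lemma card_le_card_H1_H2_H3:
  assumes "finite H"
  shows "card H \<le> card (H1 H p) + card (H2 H p) + card (H3 H p)"
proof -
  have "H = H1 H p \<union> H2 H p \<union> H3 H p" unfolding H1_def H2_def H3_def by blast
  then show ?thesis by (metis card_Un_le add_le_mono1 order_trans)
qed

theorem proposition6:
  fixes VF :: "'b set" and EF :: "'b set set"
    and V :: "'a set" and H :: "'a set set" and r :: nat
    and T :: "'a set \<Rightarrow> 'a set"
  assumes "is_graph VF EF" and "card VF \<ge> 2"
    and "r \<ge> 3"
    and "uniform_hypergraph r V H"
    and "\<not> berge_copy VF EF V H"
    and "\<forall>h \<in> H1 H (card EF). good_triangle H (card EF) h (T h)"
  shows "copies VF EF V (G2 H (card EF)) = {} \<and>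
    real (card H) \<le> (real (card EF) - 1) * real (num_copies (K_V 3) (K_E 3) V (G1 H (card EF) T))
      + real (num_copies (K_V r) (K_E r) V (G2 H (card EF)))
      + real (card (G3 H (card EF))) /
          real (min (r - 1) (card VF - 1) * (r - min (r - 1) (card VF - 1)))"
proof -
  let ?p = "card EF" and ?m = "min (r - 1) (card VF - 1) * (r - min (r - 1) (card VF - 1))"
  have finH: "finite H" using assms(4) by (rule uniform_hypergraph_finite)
  have "?m > 0" using assms(2,3) by simp
  moreover have "card (H3 H ?p) * ?m \<le> card (G3 H ?p)"
    using card_H3_mult_le_card_G3 finH uniform_hypergraph_finite(2)[OF assms(4)]
      card_light_pairs_ge_if_H3[OF assms(1,3-5)] by blast
  ultimately have H3: "real (card (H3 H ?p)) \<le> real (card (G3 H ?p)) / real ?m"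
    by (simp add: pos_le_divide_eq flip: of_nat_mult)
  have "real (card H) \<le> real (card (H1 H ?p)) + real (card (H2 H ?p)) + real (card (H3 H ?p))"
    using card_le_card_H1_H2_H3[OF finH] by (simp flip: of_nat_add)
  also have "\<dots> \<le> (real ?p - 1) * real (num_copies (K_V 3) (K_E 3) V (G1 H ?p T))
      + real (num_copies (K_V r) (K_E r) V (G2 H ?p)) + real (card (G3 H ?p)) / real ?m"
    using card_H1_le[OF assms(4,6)] card_H2_le_num_copies[OF assms(4), of ?p] H3
    by (intro add_mono) simp_all
  finally show ?thesis using copies_G2_empty[OF assms(1) finH assms(5)] by blast
qed

end
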